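(* There is a constant $c$, independent of $n$, such that for all integers $n\ge2$ the operator norm of $\mathcal I_n^*: C(\overline\Omega_H)\to C(\overline\Omega_H)$ with respect to the uniform norm satisfies $$\|\mathcal I_n^*\|_\infty\le c(\log n)^3 .$$
   Context: Let $\mathbb R^4_H=\{\mathbf t\in\mathbb R^4: t_1+t_2+t_3+t_4=0\}$, $\mathbb Z^4_H=\mathbb Z^4\cap\mathbb R^4_H$, $\Omega_H=\{\mathbf t\in\mathbb R^4_H: -1<t_i-t_j\le1,\ 1\le i<j\le4\}$ with closure $\overline\Omega_H$. Let $\mathbb H=\{\mathbf k\in\mathbb Z^4_H: k_1\equiv k_2\equiv k_3\equiv k_4\pmod4\}$, $\phi_{\mathbf k}(\mathbf t)=e^{\frac{\pi i}{2}\mathbf k\cdot\mathbf t}$, $\mathbb H_n^*=\{\mathbf k\in\mathbb H: -4n\le k_i-k_j\le4n,\ 1\le i<j\le4\}$. For $\mathbf k\in\mathbb H_n^*$, $c^{(n)}_{\mathbf k}=1$ if $\max_ik_i-\min_ik_i<4n$, and otherwise $c^{(n)}_{\mathbf k}=1/\binom{p+q}{p}$ where $p$ (resp. $q$) is the number of coordinates equal to $\max_ik_i$ (resp. $\min_ik_i$). Let $\Phi_n^*(\mathbf t)=\frac1{4n^3}\sum_{\mathbf k\in\mathbb H_n^*}c^{(n)}_{\mathbf k}\phi_{\mathbf k}(\mathbf t)$ and, for $f\in C(\overline\Omega_H)$, $\mathcal I_n^*f(\mathbf t)=\sum_{\mathbf j\in\mathbb H_n^*}f(\tfrac{\mathbf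 j}{4n})\Phi_n^*(\mathbf t-\tfrac{\mathbf j}{4n})$. *)

theory Defs
  imports "HOL-Analysis.Analysis"
begin

definition RH :: "(real^4) set" where
  "RH = {t. (\<Sum>i\<in>UNIV. t $ i) = 0}"

definition OmegaH :: "(real^4) set" where
  "OmegaH = {t \<in> RH. \<forall>i j. i < j \<longrightarrow> -1 < t $ i - t $ j \<and> t $ i - t $ j \<le> 1}"

definition Hlat :: "(int^4) set" where
  "Hlat = {k. (\<Sum>i\<in>UNIV. k $ i) = 0 \<and> (\<forall>i j. k $ i mod 4 = k $ j mod 4)}"

definition Hstar :: "nat \<Rightarrow> (int^4) set" where
  "Hstar n = {k \<in> Hlat. \<forall>i j. i < j \<longrightarrow>
      - 4 * int n \<le> k $ i - k $ j \<and> k $ i - k $ j \<le> 4 * int n}"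

definition cstar :: "nat \<Rightarrow> int^4 \<Rightarrow> real" where
  "cstar n k =
    (let M = Max (range (\<lambda>i. k $ i)); m = Min (range (\<lambda>i. k $ i));
         p = card {i. k $ i = M}; q = card {i. k $ i = m}
     in if M - m < 4 * int n then 1 else 1 / real ((p + q) choose p))"

definition phi :: "int^4 \<Rightarrow> real^4 \<Rightarrow> complex" where
  "phi k t = exp (\<i> * of_real (pi / 2 * (\<Sum>i\<in>UNIV. real_of_int (k $ i) * t $ i)))"

definition Phistar :: "nat \<Rightarrow> real^4 \<Rightarrow> complex" where
  "Phistar n t = of_real (1 / (4 * real n ^ 3)) * (\<Sum>k\<in>Hstar n. of_real (cstar n k) * phi k t)"

definition gridpt :: "nat \<Rightarrow> int^4 \<Rightarrow> real^4" where
  "gridpt n j = (\<chi> i. real_of_int (j $ i) / (4 * real n))"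

definition Istar :: "nat \<Rightarrow> (real^4 \<Rightarrow> complex) \<Rightarrow> real^4 \<Rightarrow> complex" where
  "Istar n f t = (\<Sum>j\<in>Hstar n. f (gridpt n j) * Phistar n (t - gridpt n j))"

end

theory Submission
  imports Defs
begin

text \<open>
  Every \<open>k \<in> H_n^*\<close> is \<open>4m - (m_1 + \<dots> + m_4)\<close> for a unique \<open>m \<in> {0..n}^4\<close> with a
  zero coordinate. On the hyperplane \<open>\<Sum> t_i = 0\<close> the character \<open>\<phi>_k\<close> then factors as
  \<open>\<Prod>_i e^{2\<pi>i m_i t_i}\<close>, while \<open>c_k^{(n)}\<close> only depends on which coordinates of \<open>m\<close>
  equal \<open>n\<close> and which equal \<open>0\<close>. Grouping by this type writes \<open>4n^3 \<Phi>_n^*\<close> as a bounded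
  number of products of one-dimensional exponential sums with weights of modulus at most \<open>1\<close>;
  each factor has modulus \<open>1\<close> or is a Dirichlet kernel, bounded by
  \<open>2n / (1 + n dist(t_i, \<int>))\<close>. In \<open>\<Sum>_j |\<Phi>_n^*(t - j/4n)|\<close> a coordinate where \<open>m\<close> vanishes
  contributes a factor \<open>1\<close>, and as \<open>\<Sum> j_i = 0\<close> the other three coordinates of \<open>j\<close> range
  independently over \<open>{-4n..4n}\<close>. Each of these three sums is \<open>O(n log n)\<close>, which gives
  \<open>O((n log n)^3 / n^3) = O(log^3 n)\<close>.
\<close>

section \<open>The closed domain\<close>

lemma abs_nth_le_of_sum_eq_0:
  fixes t :: "'a::linordered_idom ^ 'n"
  assumes "(\<Sum>i\<in>UNIV. t $ i) = 0" "\<And>j. \<bar>t $ i - t $ j\<bar> \<le> D"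
  shows "\<bar>t $ i\<bar> \<le> D"
proof -
  have "of_nat CARD('n) * t $ i = (\<Sum>j\<in>UNIV. t $ i - t $ j)"
    using assms(1) by (simp add: sum_subtractf)
  also have "\<bar>\<dots>\<bar> \<le> of_nat CARD('n) * D"
    using assms(2) by (intro order.trans[OF sum_abs]) (simp add: sum_bounded_above)
  finally have "of_nat CARD('n) * \<bar>t $ i\<bar> \<le> of_nat CARD('n) * D"
    by (simp add: abs_mult)
  then show ?thesis by simp
qed

lemma closure_OmegaH_subset:
  "closure OmegaH \<subseteq> {t. (\<Sum>i\<in>UNIV. t $ i) = 0 \<and> (\<forall>i j. t $ i - t $ j \<le> 1)}"
proof (rule closure_minimal)
  show "OmegaH \<subseteq> {t. (\<Sum>i\<in>UNIV. t $ i) = 0 \<and> (\<forall>i j. t $ i - t $ j \<le> 1)}"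
  proof
    fix t assume t: "t \<in> OmegaH"
    have "t $ i - t $ j \<le> 1" for i j
      using t by (cases i j rule: linorder_cases) (force simp: OmegaH_def)+
    then show "t \<in> {t. (\<Sum>i\<in>UNIV. t $ i) = 0 \<and> (\<forall>i j. t $ i - t $ j \<le> 1)}"
      using t by (simp add: OmegaH_def RH_def)
  qed
  show "closed {t :: real^4. (\<Sum>i\<in>UNIV. t $ i) = 0 \<and> (\<forall>i j. t $ i - t $ j \<le> 1)}"
    by (intro closed_Collect_conj closed_Collect_all closed_Collect_eq closed_Collect_le
        continuous_intros)
qed

lemma subset_closure_OmegaH:
  "{t. (\<Sum>i\<in>UNIV. t $ i) = 0 \<and> (\<forall>i j. t $ i - t $ j \<le> 1)} \<subseteq> closure OmegaH"
proof
  fix t :: "real^4" assume t: "t \<in> {t. (\<Sum>i\<in>UNIV. t $ i) = 0 \<and> (\<forall>i j. t $ i - t $ j \<le> 1)}"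
  \<comment> \<open>shrinking \<open>t\<close> towards \<open>0\<close> makes all the inequalities strict\<close>
  define d where "d k = inverse (real (Suc k))" for k
  define x where "x k = (1 - d k) *\<^sub>R t" for k
  have d: "0 < d k" "d k \<le> 1" for k by (auto simp: d_def inverse_le_1_iff)
  have "x k \<in> OmegaH" for k
  proof -
    have "- 1 < x k $ i - x k $ j \<and> x k $ i - x k $ j \<le> 1" for i j
    proof -
      have "\<bar>x k $ i - x k $ j\<bar> = (1 - d k) * \<bar>t $ i - t $ j\<bar>"
        using d[of k] by (simp add: x_def abs_mult flip: right_diff_distrib)
      also have "\<dots> \<le> 1 - d k"
        using t d[of k] by (intro mult_left_le) (auto simp: abs_le_iff)
      also have "\<dots> < 1" using d[of k] by simp
      finally show ?thesis by (simp add: abs_less_iff)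
    qed
    moreover have "(\<Sum>i\<in>UNIV. x k $ i) = 0"
      using t by (simp add: x_def flip: sum_distrib_left)
    ultimately show ?thesis by (simp add: OmegaH_def RH_def)
  qed
  moreover have "x \<longlonglongrightarrow> (1 - 0) *\<^sub>R t"
    unfolding x_def d_def by (intro tendsto_intros LIMSEQ_inverse_real_of_nat)
  ultimately show "t \<in> closure OmegaH"
    by (auto simp: closure_sequential)
qed

lemma mem_closure_OmegaH_iff:
  "t \<in> closure OmegaH \<longleftrightarrow> (\<Sum>i\<in>UNIV. t $ i) = 0 \<and> (\<forall>i j. t $ i - t $ j \<le> 1)"
  by (simp add: equalityI[OF closure_OmegaH_subset subset_closure_OmegaH])

lemma abs_nth_le_1_of_mem_closure_OmegaH:
  assumes "t \<in> closure OmegaH" shows "\<bar>t $ i\<bar> \<le> 1"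
  using assms by (intro abs_nth_le_of_sum_eq_0) (auto simp: mem_closure_OmegaH_iff abs_le_iff)

lemma compact_closure_OmegaH: "compact (closure OmegaH)"
proof -
  have "norm t \<le> 4" if "t \<in> closure OmegaH" for t
  proof -
    have "norm t \<le> (\<Sum>i\<in>UNIV. \<bar>t $ i\<bar>)" by (rule norm_le_l1_cart)
    also have "\<dots> \<le> (\<Sum>i\<in>(UNIV::4 set). 1)"
      using abs_nth_le_1_of_mem_closure_OmegaH[OF that] by (intro sum_mono)
    finally show ?thesis by simp
  qed
  then have "bounded (closure OmegaH)" unfolding bounded_iff by blast
  then show ?thesis by (simp add: compact_eq_bounded_closed)
qed

lemma Hstar_abs_diff_le: "j \<in> Hstar n \<Longrightarrow> \<bar>j $ a - j $ b\<bar> \<le> 4 * int n"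
  by (cases a b rule: linorder_cases) (force simp: Hstar_def)+

lemma Hstar_abs_nth_le: "j \<in> Hstar n \<Longrightarrow> \<bar>j $ i\<bar> \<le> 4 * int n"
  by (rule abs_nth_le_of_sum_eq_0) (auto simp: Hstar_def Hlat_def Hstar_abs_diff_le)

lemma gridpt_mem_closure_OmegaH:
  assumes "j \<in> Hstar n" "n > 0" shows "gridpt n j \<in> closure OmegaH"
proof -
  have "(\<Sum>i\<in>UNIV. real_of_int (j $ i)) = 0"
    using assms by (simp add: Hstar_def Hlat_def flip: of_int_sum)
  moreover have "real_of_int (j $ a - j $ b) \<le> 4 * real n" for a b
    using Hstar_abs_diff_le[OF assms(1), of a b] by linarith
  ultimately show ?thesis
    using assms(2) by (simp add: mem_closure_OmegaH_iff gridpt_def field_simps flip: sum_divide_distrib)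
qed

section \<open>One-dimensional exponential sums\<close>

definition wave :: "int \<Rightarrow> real \<Rightarrow> complex" where
  "wave a x = exp (\<i> * of_real (2 * pi * real_of_int a * x))"

definition exp_sum_norm :: "int set \<Rightarrow> real \<Rightarrow> real" where
  "exp_sum_norm S x = norm (\<Sum>a\<in>S. wave a x)"

lemma exp_sum_norm_nonneg: "0 \<le> exp_sum_norm S x"
  by (simp add: exp_sum_norm_def)

lemma exp_sum_norm_singleton [simp]: "exp_sum_norm {a} x = 1"
  by (simp add: exp_sum_norm_def wave_def)

lemma wave_of_nat: "wave (int k) x = wave 1 x ^ k"
  unfolding wave_def by (simp add: mult_ac flip: exp_of_nat_mult)

lemma wave_diff_of_int: "wave a (x - of_int z) = wave a x"
proof -
  have "\<i> * of_real (2 * pi * of_int a * x)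
      = \<i> * of_real (2 * pi * of_int a * (x - of_int z)) + \<i> * (of_int (a * z) * (of_real pi * 2))"
    by (simp add: algebra_simps)
  then show ?thesis
    unfolding wave_def by (simp only: exp_plus_2pin)
qed

lemma sin_ge_third:
  fixes x :: real assumes "0 \<le> x" "x \<le> 2" shows "x / 3 \<le> sin x"
proof -
  have "\<bar>sin x - (\<Sum>m<3. sin_coeff m * x ^ m)\<bar> \<le> inverse (fact 3) * \<bar>x\<bar> ^ 3"
    by (rule Maclaurin_sin_bound)
  moreover have "(\<Sum>m<3. sin_coeff m * x ^ m) = x"
    by (simp add: numeral_3_eq_3 sin_coeff_def)
  moreover have "\<bar>x\<bar> ^ 3 \<le> 4 * x"
  proof -
    have "x ^ 3 = x * x\<^sup>2" by (simp add: power3_eq_cube power2_eq_square)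
    also have "\<dots> \<le> x * 4"
      using assms by (intro mult_left_mono) (auto simp: power2_eq_square intro: mult_mono[of x 2 x 2, simplified])
    finally show ?thesis using assms by simp
  qed
  ultimately have "\<bar>sin x - x\<bar> \<le> 4 * x / 6" by (simp add: fact_numeral)
  then show ?thesis by linarith
qed

lemma norm_wave_minus_1_ge:
  assumes "\<bar>y\<bar> \<le> 1/2" shows "2 * \<bar>y\<bar> \<le> norm (wave 1 y - 1)"
proof -
  have "wave 1 y = cis (2 * pi * y)" by (simp add: wave_def cis_conv_exp)
  then have "norm (wave 1 y - 1) = sqrt ((cos (2*pi*y) - 1)\<^sup>2 + (sin (2*pi*y))\<^sup>2)"
    by (simp add: norm_complex_def)
  also have "(cos (2*pi*y) - 1)\<^sup>2 + (sin (2*pi*y))\<^sup>2 = (2 * sin (pi * \<bar>y\<bar>))\<^sup>2"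
  proof -
    have "cos (2*pi*y) = 1 - 2 * (sin (pi*y))\<^sup>2"
      using cos_double_sin[of "pi*y"] by (simp add: mult.assoc)
    moreover have "(sin (2*pi*y))\<^sup>2 = 1 - (cos (2*pi*y))\<^sup>2" by (simp add: sin_squared_eq)
    moreover have "(sin (pi * \<bar>y\<bar>))\<^sup>2 = (sin (pi * y))\<^sup>2" by (simp add: abs_if)
    ultimately show ?thesis by (simp add: power2_eq_square algebra_simps)
  qed
  also have "sqrt ((2 * sin (pi * \<bar>y\<bar>))\<^sup>2) = 2 * \<bar>sin (pi * \<bar>y\<bar>)\<bar>"
    by (simp only: real_sqrt_abs abs_mult abs_numeral)
  finally have eq: "norm (wave 1 y - 1) = 2 * \<bar>sin (pi * \<bar>y\<bar>)\<bar>" .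
  have "pi * \<bar>y\<bar> \<le> pi * (1/2)" using assms by (intro mult_left_mono) auto
  then have "pi * \<bar>y\<bar> \<le> 2" using pi_less_4 by linarith
  then have "pi * \<bar>y\<bar> / 3 \<le> sin (pi * \<bar>y\<bar>)" by (intro sin_ge_third) auto
  moreover have "3 * \<bar>y\<bar> \<le> pi * \<bar>y\<bar>" using pi_gt3 by (intro mult_right_mono) auto
  ultimately show ?thesis unfolding eq by linarith
qed

lemma norm_geometric_sum_le:
  fixes w :: "'a::real_normed_field"
  assumes "norm w = 1"
  shows "norm (1 - w) * norm (\<Sum>k\<in>{1..<n}. w ^ k) \<le> 2"
proof (cases "n \<le> 1")
  case False
  then have "{1..<n} = {1..n - 1}" by auto
  with False have "(1 - w) * (\<Sum>k\<in>{1..<n}. w ^ k) = w ^ 1 - w ^ Suc (n - 1)"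
    by (simp add: sum_gp_multiplied)
  also have "norm \<dots> \<le> norm (w ^ 1) + norm (w ^ Suc (n - 1))"
    by (rule norm_triangle_ineq4)
  also have "\<dots> = 2"
    by (simp only: norm_power assms power_one one_add_one)
  finally show ?thesis by (simp add: norm_mult)
qed simp

lemma exp_sum_norm_interval_eq: "exp_sum_norm {1..int n - 1} y = norm (\<Sum>k\<in>{1..<n}. wave 1 y ^ k)"
proof -
  have "{1..int n - 1} = int ` {1..<n}"
  proof
    show "{1..int n - 1} \<subseteq> int ` {1..<n}"
    proof
      fix a assume "a \<in> {1..int n - 1}"
      then have "nat a \<in> {1..<n}" "a = int (nat a)" by auto
      then show "a \<in> int ` {1..<n}" by blast
    qed
  qed auto
  then show ?thesis
    by (simp add: exp_sum_norm_def sum.reindex wave_of_nat)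
qed

lemma exp_sum_norm_interval_le:
  "exp_sum_norm {1..int n - 1} y \<le> 2 * real n / (1 + real n * \<bar>y - of_int (round y)\<bar>)"
proof -
  define d where "d = \<bar>y - of_int (round y)\<bar>"
  define E where "E = exp_sum_norm {1..int n - 1} y"
  have "E \<le> real n"
  proof -
    have "E \<le> (\<Sum>a\<in>{1..int n - 1}. norm (wave a y))"
      unfolding E_def exp_sum_norm_def by (rule norm_sum)
    also have "\<dots> \<le> real n" by (simp add: wave_def)
    finally show ?thesis .
  qed
  moreover have "d * E \<le> 1"
  proof -
    have "wave 1 y = wave 1 (y - of_int (round y))" by (simp add: wave_diff_of_int)
    moreover have "\<bar>y - of_int (round y)\<bar> \<le> 1/2" using of_int_round_abs_le[of y] by linarith
    ultimately have "2 * d \<le> norm (1 - wave 1 y)"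
      using norm_wave_minus_1_ge unfolding d_def by (metis norm_minus_commute)
    moreover have "norm (1 - wave 1 y) * E \<le> 2"
      unfolding E_def exp_sum_norm_interval_eq by (rule norm_geometric_sum_le) (simp add: wave_def)
    moreover have "0 \<le> E" unfolding E_def by (rule exp_sum_norm_nonneg)
    ultimately have "2 * d * E \<le> 2" by (meson mult_right_mono order.trans)
    then show ?thesis by simp
  qed
  ultimately have "E + real n * (d * E) \<le> real n + real n * 1"
    by (intro add_mono mult_left_mono) auto
  then have "E * (1 + real n * d) \<le> 2 * real n" by (simp add: algebra_simps)
  then show ?thesis
    unfolding E_def d_def by (simp add: pos_le_divide_eq add_pos_nonneg)
qed

lemma exp_sum_norm_interval_le_window:
  assumes "\<bar>y\<bar> \<le> 2"
  shows "exp_sum_norm {1..int n - 1} y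
           \<le> (\<Sum>z\<in>{-2..2::int}. 2 * real n / (1 + real n * \<bar>y - of_int z\<bar>))"
proof -
  have "\<bar>of_int (round y) - y\<bar> \<le> 1/2" by (rule of_int_round_abs_le)
  then have "round y < 3" "round y > -3" using assms by linarith+
  then have "round y \<in> {-2..2}" by auto
  then have "2 * real n / (1 + real n * \<bar>y - of_int (round y)\<bar>)
      \<le> (\<Sum>z\<in>{-2..2::int}. 2 * real n / (1 + real n * \<bar>y - of_int z\<bar>))"
    by (intro member_le_sum) auto
  then show ?thesis using exp_sum_norm_interval_le[of n y] by linarith
qed

lemma sum_comp_le_of_inj_on:
  fixes g :: "'b \<Rightarrow> 'c::ordered_comm_monoid_add"
  assumes "inj_on \<phi> A" "\<phi> ` A \<subseteq> B" "finite B" "\<And>b. b \<in> B \<Longrightarrow> 0 \<le> g b"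
  shows "(\<Sum>a\<in>A. g (\<phi> a)) \<le> (\<Sum>b\<in>B. g b)"
proof -
  have "(\<Sum>a\<in>A. g (\<phi> a)) = (\<Sum>b\<in>\<phi> ` A. g b)" using assms(1) by (simp add: sum.reindex)
  also have "\<dots> \<le> (\<Sum>b\<in>B. g b)" using assms by (intro sum_mono2) auto
  finally show ?thesis .
qed

lemma harm_le_1_plus_ln: "0 < n \<Longrightarrow> harm n \<le> 1 + ln (real n)"
  using euler_mascheroni_sequence_decreasing[of 1 n] by (simp add: harm_def)

lemma sum_inverse_1_plus_dist_le:
  fixes v :: real
  shows "(\<Sum>b\<le>N. 1 / (1 + \<bar>v - real b\<bar>)) \<le> 2 * harm (Suc N)"
proof -
  \<comment> \<open>Points left of \<open>p = \<lfloor>v\<rfloor>\<close> and points right of it each contribute at most \<open>harm (Suc N)\<close>.\<close>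
  define p where "p = nat \<lfloor>v\<rfloor>"
  define q where "q = min N p"
  define g where "g d = 1 / (1 + real d)" for d :: nat
  have p_le: "real p \<le> v \<or> p = 0" and p_gt: "v < real p + 1"
    unfolding p_def by linarith+
  have g_nonneg: "0 \<le> g d" for d by (simp add: g_def)
  have "(\<Sum>b\<in>{..N} \<inter> {..p}. 1 / (1 + \<bar>v - real b\<bar>)) \<le> (\<Sum>b\<in>{..N} \<inter> {..p}. g (q - b))"
  proof (intro sum_mono)
    fix b assume "b \<in> {..N} \<inter> {..p}"
    then have "real (q - b) \<le> \<bar>v - real b\<bar>" using p_le by (auto simp: q_def)
    then show "1 / (1 + \<bar>v - real b\<bar>) \<le> g (q - b)" unfolding g_def by (intro divide_left_mono) auto
  qed
  also have "\<dots> \<le> (\<Sum>d\<le>N. g d)"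
    by (rule sum_comp_le_of_inj_on) (auto simp: inj_on_def q_def g_nonneg)
  finally have left: "(\<Sum>b\<in>{..N} \<inter> {..p}. 1 / (1 + \<bar>v - real b\<bar>)) \<le> (\<Sum>d\<le>N. g d)" .
  have "(\<Sum>b\<in>{..N} - {..p}. 1 / (1 + \<bar>v - real b\<bar>)) \<le> (\<Sum>b\<in>{..N} - {..p}. g (b - p - 1))"
  proof (intro sum_mono)
    fix b assume "b \<in> {..N} - {..p}"
    then have "real (b - p - 1) \<le> \<bar>v - real b\<bar>" using p_gt by auto
    then show "1 / (1 + \<bar>v - real b\<bar>) \<le> g (b - p - 1)" unfolding g_def by (intro divide_left_mono) auto
  qed
  also have "\<dots> \<le> (\<Sum>d\<le>N. g d)"
    by (rule sum_comp_le_of_inj_on) (auto simp: inj_on_def g_nonneg)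
  finally have right: "(\<Sum>b\<in>{..N} - {..p}. 1 / (1 + \<bar>v - real b\<bar>)) \<le> (\<Sum>d\<le>N. g d)" .
  have "(\<Sum>d\<le>N. g d) = harm (Suc N)"
    by (simp add: harm_altdef g_def lessThan_Suc_atMost[symmetric] field_simps)
  moreover have "(\<Sum>b\<le>N. 1 / (1 + \<bar>v - real b\<bar>))
      = (\<Sum>b\<in>{..N} \<inter> {..p}. 1 / (1 + \<bar>v - real b\<bar>)) + (\<Sum>b\<in>{..N} - {..p}. 1 / (1 + \<bar>v - real b\<bar>))"
    by (rule sum.Int_Diff) simp
  ultimately show ?thesis using left right by linarith
qed

lemma sum_int_inverse_1_plus_dist_le:
  fixes v :: real
  shows "(\<Sum>a\<in>{- int m..int m}. 1 / (1 + \<bar>v - of_int a\<bar>)) \<le> 2 * harm (2 * m + 1)"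
proof -
  have "{- int m..int m} = (\<lambda>b. int b - int m) ` {..2 * m}"
  proof
    show "{- int m..int m} \<subseteq> (\<lambda>b. int b - int m) ` {..2 * m}"
    proof
      fix a assume "a \<in> {- int m..int m}"
      then have "nat (a + int m) \<in> {..2 * m}" "a = int (nat (a + int m)) - int m" by auto
      then show "a \<in> (\<lambda>b. int b - int m) ` {..2 * m}" by blast
    qed
  qed auto
  moreover have "inj_on (\<lambda>b. int b - int m) {..2 * m}" by (auto simp: inj_on_def)
  ultimately have "(\<Sum>a\<in>{- int m..int m}. 1 / (1 + \<bar>v - of_int a\<bar>))
      = (\<Sum>b\<le>2 * m. 1 / (1 + \<bar>(v + real m) - real b\<bar>))"
    by (simp add: sum.reindex algebra_simps)
  also have "\<dots> \<le> 2 * harm (2 * m + 1)"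
    using sum_inverse_1_plus_dist_le[where v = "v + real m" and N = "2 * m"] by simp
  finally show ?thesis .
qed

definition line_bound :: "nat \<Rightarrow> real" where
  "line_bound n = 80 * real n * (1 + ln (8 * real n + 1))"

lemma sum_grid_dirichlet_bound_le:
  assumes "n > 0"
  shows "(\<Sum>a\<in>{-4 * int n..4 * int n}. 2 * real n / (1 + real n * \<bar>u - of_int a / (4 * real n)\<bar>))
           \<le> 16 * real n * (1 + ln (8 * real n + 1))"
proof -
  define v where "v = 4 * real n * u"
  have "2 * real n / (1 + real n * \<bar>u - of_int a / (4 * real n)\<bar>)
      \<le> 8 * real n * (1 / (1 + \<bar>v - of_int a\<bar>))" for a
  proof -
    have "real n * \<bar>u - of_int a / (4 * real n)\<bar> = \<bar>v - of_int a\<bar> / 4"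
      using assms by (simp add: v_def field_simps flip: abs_mult)
    then have "2 * real n / (1 + real n * \<bar>u - of_int a / (4 * real n)\<bar>)
        = 2 * real n / (1 + \<bar>v - of_int a\<bar> / 4)"
      by (simp only:)
    also have "\<dots> = 8 * real n / (4 + \<bar>v - of_int a\<bar>)"
      by (simp add: field_simps)
    also have "\<dots> \<le> 8 * real n / (1 + \<bar>v - of_int a\<bar>)"
      by (intro divide_left_mono) (auto intro: add_pos_nonneg)
    finally show ?thesis by simp
  qed
  then have "(\<Sum>a\<in>{-4 * int n..4 * int n}. 2 * real n / (1 + real n * \<bar>u - of_int a / (4 * real n)\<bar>))
      \<le> 8 * real n * (\<Sum>a\<in>{-4 * int n..4 * int n}. 1 / (1 + \<bar>v - of_int a\<bar>))"
    by (simp add: sum_distrib_left sum_mono)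
  also have "\<dots> \<le> 8 * real n * (2 * (1 + ln (8 * real n + 1)))"
  proof (intro mult_left_mono)
    have "(\<Sum>a\<in>{-4 * int n..4 * int n}. 1 / (1 + \<bar>v - of_int a\<bar>)) \<le> 2 * harm (8 * n + 1)"
      using sum_int_inverse_1_plus_dist_le[of v "4 * n"] by simp
    also have "harm (8 * n + 1) \<le> 1 + ln (8 * real n + 1)"
      using harm_le_1_plus_ln[of "8 * n + 1"] by (simp add: add.commute)
    finally show "(\<Sum>a\<in>{-4 * int n..4 * int n}. 1 / (1 + \<bar>v - of_int a\<bar>))
        \<le> 2 * (1 + ln (8 * real n + 1))" by simp
  qed simp
  finally show ?thesis by (simp add: algebra_simps)
qed

lemma exp_sum_norm_interval_grid_sum_le:
  assumes "n > 0" "\<bar>x\<bar> \<le> 1"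
  shows "(\<Sum>a\<in>{-4 * int n..4 * int n}. exp_sum_norm {1..int n - 1} (x - of_int a / (4 * real n)))
           \<le> line_bound n"
proof -
  define y where "y a = x - of_int a / (4 * real n)" for a :: int
  define A where "A = {-4 * int n..4 * int n}"
  have y_bound: "\<bar>y a\<bar> \<le> 2" if "a \<in> A" for a
  proof -
    have "\<bar>of_int a / (4 * real n)\<bar> \<le> 1"
      using that assms(1) by (auto simp: A_def abs_divide divide_le_eq_1)
    then show ?thesis unfolding y_def using assms(2) by linarith
  qed
  have "(\<Sum>a\<in>A. exp_sum_norm {1..int n - 1} (y a))
      \<le> (\<Sum>a\<in>A. \<Sum>z\<in>{-2..2::int}. 2 * real n / (1 + real n * \<bar>y a - of_int z\<bar>))"
    by (intro sum_mono exp_sum_norm_interval_le_window y_bound)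
  also have "\<dots> = (\<Sum>z\<in>{-2..2::int}. \<Sum>a\<in>A. 2 * real n / (1 + real n * \<bar>y a - of_int z\<bar>))"
    by (rule sum.swap)
  also have "\<dots> \<le> (\<Sum>z\<in>{-2..2::int}. 16 * real n * (1 + ln (8 * real n + 1)))"
  proof (rule sum_mono)
    fix z :: int
    have "\<bar>y a - of_int z\<bar> = \<bar>(x - of_int z) - of_int a / (4 * real n)\<bar>" for a
      by (simp add: y_def algebra_simps)
    then show "(\<Sum>a\<in>A. 2 * real n / (1 + real n * \<bar>y a - of_int z\<bar>))
        \<le> 16 * real n * (1 + ln (8 * real n + 1))"
      using sum_grid_dirichlet_bound_le[OF assms(1), of "x - of_int z"] by (simp add: A_def)
  qed
  also have "\<dots> = line_bound n" by (simp add: line_bound_def)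
  finally show ?thesis by (simp add: y_def A_def)
qed

lemma line_bound_ge: "n > 0 \<Longrightarrow> real (8 * n + 1) \<le> line_bound n"
proof -
  assume "n > 0"
  then have "real (8 * n + 1) \<le> 80 * real n * 1" by simp
  also have "\<dots> \<le> line_bound n" unfolding line_bound_def by (intro mult_left_mono) auto
  finally show ?thesis .
qed

lemma line_bound_le:
  assumes "n \<ge> 2" shows "line_bound n \<le> 560 * real n * ln (real n)"
proof -
  have n2: "real n \<ge> 2" using assms by simp
  have "8 * real n + 1 \<le> real n ^ 5"
  proof -
    have "9 \<le> real n ^ 4" using power_mono[OF n2, of 4] by simp
    then have "9 * real n \<le> real n ^ 4 * real n" using n2 by (intro mult_right_mono) auto
    moreover have "real n ^ 4 * real n = real n ^ 5" using power_add[of "real n" 4 1] by simp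
    ultimately show ?thesis using n2 by linarith
  qed
  then have "ln (8 * real n + 1) \<le> 5 * ln (real n)"
    using n2 by (simp add: ln_realpow flip: ln_le_cancel_iff)
  moreover have "ln 2 \<le> ln (real n)" using n2 by simp
  then have "1 \<le> 2 * ln (real n)" using ln2_ge_two_thirds by linarith
  ultimately have "1 + ln (8 * real n + 1) \<le> 7 * ln (real n)" by linarith
  then show ?thesis unfolding line_bound_def using n2 by (simp add: mult_left_mono)
qed

lemma line_bound_cube_le:
  assumes "n \<ge> 2" shows "line_bound n ^ 3 / (4 * real n ^ 3) \<le> 560 ^ 3 / 4 * ln (real n) ^ 3"
proof -
  have "line_bound n ^ 3 \<le> (560 * real n * ln (real n)) ^ 3"
    using line_bound_le[OF assms] by (intro power_mono) (auto simp: line_bound_def)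
  then have "line_bound n ^ 3 / (4 * real n ^ 3) \<le> (560 * real n * ln (real n)) ^ 3 / (4 * real n ^ 3)"
    by (intro divide_right_mono) auto
  also have "\<dots> = 560 ^ 3 / 4 * ln (real n) ^ 3"
    using assms by (simp add: power_mult_distrib field_simps)
  finally show ?thesis .
qed

section \<open>Parametrising \<open>H_n^*\<close>\<close>

lemma bij_betw_vec_lambda_PiE: "bij_betw vec_lambda (PiE UNIV S) {x. \<forall>i. x $ i \<in> S i}"
proof (rule bij_betw_imageI)
  show "inj_on vec_lambda (PiE UNIV S)" by (auto simp: inj_on_def vec_lambda_inject)
  show "vec_lambda ` PiE UNIV S = {x. \<forall>i. x $ i \<in> S i}"
  proof (intro equalityI subsetI)
    fix x assume "x \<in> {x. \<forall>i. x $ i \<in> S i}"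
    then have "vec_nth x \<in> PiE UNIV S" by auto
    then show "x \<in> vec_lambda ` PiE UNIV S" by (metis image_eqI vec_nth_inverse)
  qed auto
qed

lemma finite_vec_box:
  "(\<And>i. finite (S i)) \<Longrightarrow> finite {x :: 'a ^ 'n. \<forall>i. x $ i \<in> S i}"
  using bij_betw_finite[OF bij_betw_vec_lambda_PiE[where S = S]] by (auto intro: finite_PiE)

lemma sum_prod_vec_box:
  fixes f :: "'n::finite \<Rightarrow> 'a \<Rightarrow> 'c::comm_semiring_1"
  assumes "\<And>i. finite (S i)"
  shows "(\<Sum>x\<in>{x :: 'a ^ 'n. \<forall>i. x $ i \<in> S i}. \<Prod>i\<in>UNIV. f i (x $ i)) = (\<Prod>i\<in>UNIV. \<Sum>a\<in>S i. f i a)"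
proof -
  have "(\<Prod>i\<in>UNIV. \<Sum>a\<in>S i. f i a) = (\<Sum>g\<in>PiE UNIV S. \<Prod>i\<in>UNIV. f i (g i))"
    using assms by (intro prod_sum_PiE) auto
  also have "\<dots> = (\<Sum>x\<in>{x :: 'a ^ 'n. \<forall>i. x $ i \<in> S i}. \<Prod>i\<in>UNIV. f i (x $ i))"
    using sum.reindex_bij_betw[OF bij_betw_vec_lambda_PiE[where S = S],
        where g = "\<lambda>x. \<Prod>i\<in>UNIV. f i (x $ i)"] by simp
  finally show ?thesis by simp
qed

definition Mbox :: "nat \<Rightarrow> (int^4) set" where
  "Mbox n = {m. (\<forall>i. 0 \<le> m $ i \<and> m $ i \<le> int n) \<and> (\<exists>i. m $ i = 0)}"

definition kappa :: "int^4 \<Rightarrow> int^4" where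
  "kappa m = (\<chi> i. 4 * m $ i - (\<Sum>l\<in>UNIV. m $ l))"

lemma kappa_nth [simp]: "kappa m $ i = 4 * m $ i - (\<Sum>l\<in>UNIV. m $ l)"
  by (simp add: kappa_def)

lemma finite_Mbox: "finite (Mbox n)"
proof (rule finite_subset)
  show "Mbox n \<subseteq> {m :: int^4. \<forall>i. m $ i \<in> {0..int n}}" by (auto simp: Mbox_def)
qed (rule finite_vec_box, simp)

lemma inj_on_kappa_Mbox: "inj_on kappa (Mbox n)"
proof (rule inj_onI)
  fix m m' assume m: "m \<in> Mbox n" and m': "m' \<in> Mbox n" and eq: "kappa m = kappa m'"
  define s where "s = (\<Sum>l\<in>UNIV. m $ l)"
  define s' where "s' = (\<Sum>l\<in>UNIV. m' $ l)"
  have eq_nth: "4 * m $ i - s = 4 * m' $ i - s'" for i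
    using arg_cong[OF eq, of "\<lambda>v. v $ i"] by (simp add: s_def s'_def)
  \<comment> \<open>comparing the coordinates where \<open>m\<close>, resp. \<open>m'\<close>, vanish gives \<open>s = s'\<close>\<close>
  obtain i i' where "m $ i = 0" "m' $ i' = 0" using m m' by (auto simp: Mbox_def)
  moreover have "0 \<le> m' $ i" "0 \<le> m $ i'" using m m' by (auto simp: Mbox_def)
  ultimately have "s = s'" using eq_nth[of i] eq_nth[of i'] by linarith
  then show "m = m'" using eq_nth by (simp add: vec_eq_iff)
qed

lemma kappa_mem_Hstar: "m \<in> Mbox n \<Longrightarrow> kappa m \<in> Hstar n"
proof -
  assume m: "m \<in> Mbox n"
  have "(\<Sum>i\<in>UNIV. kappa m $ i) = 0"
    by (simp add: sum_subtractf flip: sum_distrib_left)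
  moreover have "kappa m $ i mod 4 = kappa m $ j mod 4" for i j
    by (simp add: mod_diff_left_eq[of "4 * _", symmetric])
  moreover have "- 4 * int n \<le> kappa m $ i - kappa m $ j \<and> kappa m $ i - kappa m $ j \<le> 4 * int n" for i j
  proof -
    have "0 \<le> m $ i" "m $ i \<le> int n" "0 \<le> m $ j" "m $ j \<le> int n" using m by (auto simp: Mbox_def)
    then show ?thesis by auto
  qed
  ultimately show ?thesis by (simp add: Hstar_def Hlat_def)
qed

lemma Hstar_subset_kappa_image: "Hstar n \<subseteq> kappa ` Mbox n"
proof
  fix k assume k: "k \<in> Hstar n"
  define \<mu> where "\<mu> = Min (range (\<lambda>i. k $ i))"
  have "\<mu> \<in> range (\<lambda>i. k $ i)" unfolding \<mu>_def by (intro Min_in) auto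
  then obtain i0 where i0: "k $ i0 = \<mu>" by auto
  have le: "\<mu> \<le> k $ i" for i unfolding \<mu>_def by (intro Min_le) auto
  have dvd: "4 dvd k $ i - \<mu>" for i
    using k i0 by (auto simp: Hstar_def Hlat_def mod_eq_dvd_iff)
  define m where "m = (\<chi> i. (k $ i - \<mu>) div 4)"
  have m4: "4 * m $ i = k $ i - \<mu>" for i using dvd[of i] by (simp add: m_def)
  have "4 * (\<Sum>l\<in>UNIV. m $ l) = (\<Sum>l\<in>UNIV. k $ l - \<mu>)" by (simp add: sum_distrib_left m4)
  also have "\<dots> = - 4 * \<mu>" using k by (simp add: sum_subtractf Hstar_def Hlat_def)
  finally have "kappa m = k" by (simp add: vec_eq_iff m4)
  moreover have "m \<in> Mbox n"
  proof -
    have "0 \<le> m $ i \<and> m $ i \<le> int n" for i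
      using m4[of i] le[of i] Hstar_abs_diff_le[OF k, of i i0] i0 by auto
    moreover have "m $ i0 = 0" using m4[of i0] i0 by simp
    ultimately show ?thesis by (auto simp: Mbox_def)
  qed
  ultimately show "k \<in> kappa ` Mbox n" by blast
qed

lemma bij_betw_kappa_Mbox_Hstar: "bij_betw kappa (Mbox n) (Hstar n)"
  by (intro bij_betw_imageI inj_on_kappa_Mbox equalityI Hstar_subset_kappa_image)
    (auto intro: kappa_mem_Hstar)

lemma phi_kappa:
  assumes "(\<Sum>i\<in>UNIV. s $ i) = 0"
  shows "phi (kappa m) s = (\<Prod>i\<in>UNIV. wave (m $ i) (s $ i))"
proof -
  define \<sigma> where "\<sigma> = (\<Sum>l\<in>UNIV. m $ l)"
  have "(\<Sum>i\<in>UNIV. real_of_int (kappa m $ i) * s $ i)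
      = (\<Sum>i\<in>UNIV. 4 * (real_of_int (m $ i) * s $ i)) - real_of_int \<sigma> * (\<Sum>i\<in>UNIV. s $ i)"
    by (simp add: algebra_simps sum_subtractf sum_distrib_left flip: \<sigma>_def)
  then have "pi / 2 * (\<Sum>i\<in>UNIV. real_of_int (kappa m $ i) * s $ i)
      = (\<Sum>i\<in>UNIV. 2 * pi * real_of_int (m $ i) * s $ i)"
    using assms by (simp add: sum_distrib_left algebra_simps)
  then show ?thesis
    by (simp add: phi_def wave_def sum_distrib_left exp_sum)
qed

section \<open>Grouping the kernel by types\<close>

definition extreme_type :: "nat \<Rightarrow> int^4 \<Rightarrow> 4 set \<times> 4 set" where
  "extreme_type n m = ({i. m $ i = int n}, {i. m $ i = 0})"

definition type_weight :: "4 set \<times> 4 set \<Rightarrow> real" where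
  "type_weight y =
    (if fst y = {} then 1 else 1 / real ((card (fst y) + card (snd y)) choose card (fst y)))"

definition type_fibre :: "nat \<Rightarrow> 4 set \<times> 4 set \<Rightarrow> 4 \<Rightarrow> int set" where
  "type_fibre n y i = (if i \<in> snd y then {0} else if i \<in> fst y then {int n} else {1..int n - 1})"

lemma finite_type_fibre [simp]: "finite (type_fibre n y i)"
  by (simp add: type_fibre_def)

lemma abs_type_weight_le: "\<bar>type_weight y\<bar> \<le> 1"
proof -
  have "1 / real k \<le> 1" for k :: nat by (cases k) auto
  then show ?thesis by (simp add: type_weight_def)
qed

lemma cstar_kappa:
  assumes "m \<in> Mbox n" "n > 0"
  shows "cstar n (kappa m) = type_weight (extreme_type n m)"
proof -
  define \<sigma> where "\<sigma> = (\<Sum>l\<in>UNIV. m $ l)"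
  define M where "M = Max (range (\<lambda>i. m $ i))"
  have range_kappa: "range (\<lambda>i. kappa m $ i) = (\<lambda>x. 4 * x - \<sigma>) ` range (\<lambda>i. m $ i)"
    by (auto simp: \<sigma>_def)
  have mono: "mono (\<lambda>x::int. 4 * x - \<sigma>)" by (auto intro: monoI)
  have "Max (range (\<lambda>i. kappa m $ i)) = 4 * M - \<sigma>"
    unfolding range_kappa M_def by (simp add: mono_Max_commute[OF mono, symmetric])
  moreover have "Min (range (\<lambda>i. m $ i)) = 0"
    using assms(1) by (intro Min_eqI) (auto simp: Mbox_def)
  then have "Min (range (\<lambda>i. kappa m $ i)) = - \<sigma>"
    unfolding range_kappa by (simp add: mono_Min_commute[OF mono, symmetric])
  moreover have "M \<le> int n" "M = int n \<longleftrightarrow> {i. m $ i = int n} \<noteq> {}"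
  proof -
    have bounds: "0 \<le> m $ i \<and> m $ i \<le> int n" for i using assms(1) by (auto simp: Mbox_def)
    have "M \<in> range (\<lambda>i. m $ i)" unfolding M_def by (intro Max_in) auto
    then obtain iM where iM: "M = m $ iM" by auto
    have M_ge: "m $ i \<le> M" for i by (auto simp: M_def intro: Max_ge)
    show M_le: "M \<le> int n" using bounds iM by simp
    show "M = int n \<longleftrightarrow> {i. m $ i = int n} \<noteq> {}"
    proof
      assume "{i. m $ i = int n} \<noteq> {}"
      then obtain x where "m $ x = int n" by auto
      then show "M = int n" using M_ge[of x] M_le by simp
    qed (use iM in auto)
  qed
  moreover have "{i. kappa m $ i = 4 * int n - \<sigma>} = {i. m $ i = int n}"
    "{i. kappa m $ i = - \<sigma>} = {i. m $ i = 0}" by (auto simp: \<sigma>_def)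
  ultimately show ?thesis
    by (auto simp: cstar_def type_weight_def extreme_type_def Let_def)
qed

lemma Mbox_fibre_eq:
  assumes "n > 0" "m0 \<in> Mbox n"
  shows "{m \<in> Mbox n. extreme_type n m = extreme_type n m0}
           = {m. \<forall>i. m $ i \<in> type_fibre n (extreme_type n m0) i}"
proof -
  have fibre_iff: "a \<in> type_fibre n (extreme_type n m0) i \<longleftrightarrow>
      0 \<le> a \<and> a \<le> int n \<and> (a = int n \<longleftrightarrow> m0 $ i = int n) \<and> (a = 0 \<longleftrightarrow> m0 $ i = 0)" for a i
    using assms by (auto simp: type_fibre_def extreme_type_def Mbox_def)
  have type_eq_iff: "extreme_type n m = extreme_type n m0 \<longleftrightarrow>
      (\<forall>i. (m $ i = int n \<longleftrightarrow> m0 $ i = int n) \<and> (m $ i = 0 \<longleftrightarrow> m0 $ i = 0))" for m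
    by (auto simp: extreme_type_def set_eq_iff)
  show ?thesis
    using assms(2) by (auto simp: fibre_iff type_eq_iff Mbox_def)
qed

lemma Hstar_kernel_sum_eq:
  assumes "n > 0" "(\<Sum>i\<in>UNIV. s $ i) = 0"
  shows "(\<Sum>k\<in>Hstar n. of_real (cstar n k) * phi k s)
       = (\<Sum>y\<in>extreme_type n ` Mbox n.
            of_real (type_weight y) * (\<Prod>i\<in>UNIV. \<Sum>a\<in>type_fibre n y i. wave a (s $ i)))"
proof -
  define F where "F m = of_real (type_weight (extreme_type n m)) * (\<Prod>i\<in>UNIV. wave (m $ i) (s $ i))" for m
  have "(\<Sum>k\<in>Hstar n. of_real (cstar n k) * phi k s)
      = (\<Sum>m\<in>Mbox n. of_real (cstar n (kappa m)) * phi (kappa m) s)"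
    by (rule sum.reindex_bij_betw[OF bij_betw_kappa_Mbox_Hstar, symmetric])
  also have "\<dots> = (\<Sum>m\<in>Mbox n. F m)"
    using assms by (intro sum.cong refl) (simp add: F_def cstar_kappa phi_kappa)
  also have "\<dots> = (\<Sum>y\<in>extreme_type n ` Mbox n. \<Sum>m\<in>{m \<in> Mbox n. extreme_type n m = y}. F m)"
    by (rule sum.image_gen[OF finite_Mbox])
  also have "\<dots> = (\<Sum>y\<in>extreme_type n ` Mbox n.
      of_real (type_weight y) * (\<Prod>i\<in>UNIV. \<Sum>a\<in>type_fibre n y i. wave a (s $ i)))"
  proof (rule sum.cong[OF refl])
    fix y assume "y \<in> extreme_type n ` Mbox n"
    then obtain m0 where m0: "m0 \<in> Mbox n" "y = extreme_type n m0" by blast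
    have "(\<Sum>m\<in>{m \<in> Mbox n. extreme_type n m = y}. F m)
        = (\<Sum>m\<in>{m. \<forall>i. m $ i \<in> type_fibre n y i}.
             of_real (type_weight y) * (\<Prod>i\<in>UNIV. wave (m $ i) (s $ i)))"
      unfolding m0(2) Mbox_fibre_eq[OF assms(1) m0(1), symmetric] by (intro sum.cong) (auto simp: F_def)
    also have "\<dots> = of_real (type_weight y) * (\<Prod>i\<in>UNIV. \<Sum>a\<in>type_fibre n y i. wave a (s $ i))"
      using sum_prod_vec_box[where S = "type_fibre n y" and f = "\<lambda>i a. wave a (s $ i)"]
      by (simp flip: sum_distrib_left)
    finally show "(\<Sum>m\<in>{m \<in> Mbox n. extreme_type n m = y}. F m)
        = of_real (type_weight y) * (\<Prod>i\<in>UNIV. \<Sum>a\<in>type_fibre n y i. wave a (s $ i))" .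
  qed
  finally show ?thesis .
qed

definition kernel_majorant :: "nat \<Rightarrow> real^4 \<Rightarrow> real" where
  "kernel_majorant n s =
    (\<Sum>y\<in>{y. snd y \<noteq> {}}. \<Prod>i\<in>UNIV. exp_sum_norm (type_fibre n y i) (s $ i))"

lemma norm_Hstar_kernel_sum_le:
  assumes "n > 0" "(\<Sum>i\<in>UNIV. s $ i) = 0"
  shows "norm (\<Sum>k\<in>Hstar n. of_real (cstar n k) * phi k s) \<le> kernel_majorant n s"
proof -
  have "norm (\<Sum>k\<in>Hstar n. of_real (cstar n k) * phi k s)
      \<le> (\<Sum>y\<in>extreme_type n ` Mbox n.
            norm (of_real (type_weight y) * (\<Prod>i\<in>UNIV. \<Sum>a\<in>type_fibre n y i. wave a (s $ i))))"
    unfolding Hstar_kernel_sum_eq[OF assms] by (rule norm_sum)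
  also have "\<dots> \<le> (\<Sum>y\<in>extreme_type n ` Mbox n. \<Prod>i\<in>UNIV. exp_sum_norm (type_fibre n y i) (s $ i))"
  proof (rule sum_mono)
    fix y
    have "norm (of_real (type_weight y) * (\<Prod>i\<in>UNIV. \<Sum>a\<in>type_fibre n y i. wave a (s $ i)))
        = \<bar>type_weight y\<bar> * (\<Prod>i\<in>UNIV. exp_sum_norm (type_fibre n y i) (s $ i))"
      by (simp add: norm_mult exp_sum_norm_def flip: prod_norm)
    also have "\<dots> \<le> (\<Prod>i\<in>UNIV. exp_sum_norm (type_fibre n y i) (s $ i))"
      using abs_type_weight_le by (intro mult_left_le_one_le prod_nonneg exp_sum_norm_nonneg) auto
    finally show "norm (of_real (type_weight y) * (\<Prod>i\<in>UNIV. \<Sum>a\<in>type_fibre n y i. wave a (s $ i)))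
        \<le> (\<Prod>i\<in>UNIV. exp_sum_norm (type_fibre n y i) (s $ i))" .
  qed
  also have "\<dots> \<le> (\<Sum>y\<in>{y. snd y \<noteq> {}}. \<Prod>i\<in>UNIV. exp_sum_norm (type_fibre n y i) (s $ i))"
    by (intro sum_mono2 prod_nonneg exp_sum_norm_nonneg) (auto simp: extreme_type_def Mbox_def)
  finally show ?thesis unfolding kernel_majorant_def .
qed

section \<open>Summation over the grid\<close>

lemma Hstar_sum_prod_le:
  fixes v :: "4 \<Rightarrow> int \<Rightarrow> real"
  assumes "\<And>i a. 0 \<le> v i a"
  shows "(\<Sum>j\<in>Hstar n. \<Prod>i\<in>-{i0}. v i (j $ i)) \<le> (\<Prod>i\<in>-{i0}. \<Sum>a\<in>{-4 * int n..4 * int n}. v i a)"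
proof -
  \<comment> \<open>A point of \<open>H_n^*\<close> is determined by its coordinates off \<open>i0\<close>, since they sum to \<open>0\<close>.\<close>
  define \<rho> where "\<rho> j = restrict (\<lambda>i. j $ i) (-{i0})" for j :: "int^4"
  have "inj_on \<rho> (Hstar n)"
  proof (rule inj_onI)
    fix j j' assume j: "j \<in> Hstar n" and j': "j' \<in> Hstar n" and eq: "\<rho> j = \<rho> j'"
    have off: "j $ i = j' $ i" if "i \<noteq> i0" for i
      using fun_cong[OF eq, of i] that by (simp add: \<rho>_def)
    have "j $ i0 + (\<Sum>i\<in>-{i0}. j $ i) = j' $ i0 + (\<Sum>i\<in>-{i0}. j' $ i)"
      using j j' by (simp add: Hstar_def Hlat_def sum.remove[of UNIV i0] Compl_eq_Diff_UNIV)
    moreover have "(\<Sum>i\<in>-{i0}. j $ i) = (\<Sum>i\<in>-{i0}. j' $ i)" using off by (intro sum.cong) auto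
    ultimately have "j $ i0 = j' $ i0" by simp
    with off show "j = j'" by (metis vec_eq_iff)
  qed
  moreover have "\<rho> j \<in> PiE (-{i0}) (\<lambda>_. {-4 * int n..4 * int n})" if "j \<in> Hstar n" for j
  proof -
    have "j $ i \<in> {-4 * int n..4 * int n}" for i using Hstar_abs_nth_le[OF that, of i] by auto
    then show ?thesis by (auto simp: \<rho>_def)
  qed
  ultimately have "(\<Sum>j\<in>Hstar n. \<Prod>i\<in>-{i0}. v i (\<rho> j i))
      \<le> (\<Sum>g\<in>PiE (-{i0}) (\<lambda>_. {-4 * int n..4 * int n}). \<Prod>i\<in>-{i0}. v i (g i))"
    by (intro sum_comp_le_of_inj_on[where g = "\<lambda>g. \<Prod>i\<in>-{i0}. v i (g i)"])
      (auto intro: prod_nonneg assms finite_PiE image_subsetI)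
  also have "\<dots> = (\<Prod>i\<in>-{i0}. \<Sum>a\<in>{-4 * int n..4 * int n}. v i a)"
    by (rule prod_sum_PiE[symmetric]) auto
  finally show ?thesis by (simp add: \<rho>_def)
qed

lemma type_fibre_grid_sum_le:
  assumes "n > 0" "\<bar>x\<bar> \<le> 1"
  shows "(\<Sum>a\<in>{-4 * int n..4 * int n}. exp_sum_norm (type_fibre n y i) (x - of_int a / (4 * real n)))
           \<le> line_bound n"
  using exp_sum_norm_interval_grid_sum_le[OF assms] line_bound_ge[OF assms(1)]
  by (auto simp: type_fibre_def)

lemma sum_type_product_grid_le:
  assumes "n > 0" "t \<in> closure OmegaH" "snd y \<noteq> {}"
  shows "(\<Sum>j\<in>Hstar n. \<Prod>i\<in>UNIV. exp_sum_norm (type_fibre n y i) ((t - gridpt n j) $ i))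
           \<le> line_bound n ^ 3"
proof -
  \<comment> \<open>the factor of a coordinate in \<open>snd y\<close> is identically \<open>1\<close>\<close>
  obtain i0 where i0: "i0 \<in> snd y" using assms(3) by blast
  define v where "v i a = exp_sum_norm (type_fibre n y i) (t $ i - of_int a / (4 * real n))" for i a
  have "(\<Prod>i\<in>UNIV. exp_sum_norm (type_fibre n y i) ((t - gridpt n j) $ i))
      = (\<Prod>i\<in>-{i0}. v i (j $ i))" for j
  proof -
    have "(\<Prod>i\<in>UNIV. exp_sum_norm (type_fibre n y i) ((t - gridpt n j) $ i))
        = v i0 (j $ i0) * (\<Prod>i\<in>-{i0}. v i (j $ i))"
      by (simp add: v_def gridpt_def prod.remove[of UNIV i0] Compl_eq_Diff_UNIV)
    then show ?thesis using i0 by (simp add: v_def type_fibre_def)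
  qed
  then have "(\<Sum>j\<in>Hstar n. \<Prod>i\<in>UNIV. exp_sum_norm (type_fibre n y i) ((t - gridpt n j) $ i))
      = (\<Sum>j\<in>Hstar n. \<Prod>i\<in>-{i0}. v i (j $ i))" by simp
  also have "\<dots> \<le> (\<Prod>i\<in>-{i0}. \<Sum>a\<in>{-4 * int n..4 * int n}. v i a)"
    by (rule Hstar_sum_prod_le) (simp add: v_def exp_sum_norm_nonneg)
  also have "\<dots> \<le> (\<Prod>i\<in>-{i0}. line_bound n)"
    using type_fibre_grid_sum_le[OF assms(1) abs_nth_le_1_of_mem_closure_OmegaH[OF assms(2)]]
    by (intro prod_mono) (auto simp: v_def intro: sum_nonneg exp_sum_norm_nonneg)
  also have "\<dots> = line_bound n ^ 3" by (simp add: Compl_eq_Diff_UNIV card_Diff_singleton)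
  finally show ?thesis .
qed

lemma sum_kernel_majorant_grid_le:
  assumes "n > 0" "t \<in> closure OmegaH"
  shows "(\<Sum>j\<in>Hstar n. kernel_majorant n (t - gridpt n j))
           \<le> card {y :: 4 set \<times> 4 set. snd y \<noteq> {}} * line_bound n ^ 3"
proof -
  have "(\<Sum>y\<in>{y. snd y \<noteq> {}}.
          \<Sum>j\<in>Hstar n. \<Prod>i\<in>UNIV. exp_sum_norm (type_fibre n y i) ((t - gridpt n j) $ i))
      \<le> (\<Sum>y\<in>{y :: 4 set \<times> 4 set. snd y \<noteq> {}}. line_bound n ^ 3)"
    using sum_type_product_grid_le[OF assms] by (intro sum_mono) auto
  then show ?thesis unfolding kernel_majorant_def by (subst sum.swap) simp
qed

lemma norm_Istar_le:
  assumes "n > 0" "t \<in> closure OmegaH" "\<And>x. x \<in> closure OmegaH \<Longrightarrow> norm (f x) \<le> B"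
  shows "norm (Istar n f t)
           \<le> card {y :: 4 set \<times> 4 set. snd y \<noteq> {}} * (line_bound n ^ 3 / (4 * real n ^ 3)) * B"
proof -
  have B: "0 \<le> B" using assms(3)[OF assms(2)] by (meson norm_ge_zero order_trans)
  have "norm (f (gridpt n j) * Phistar n (t - gridpt n j)) \<le> B * (kernel_majorant n (t - gridpt n j) / (4 * real n ^ 3))"
    if j: "j \<in> Hstar n" for j
  proof -
    have grid: "gridpt n j \<in> closure OmegaH" using gridpt_mem_closure_OmegaH[OF j assms(1)] .
    then have "(\<Sum>i\<in>UNIV. (t - gridpt n j) $ i) = 0"
      using assms(2) by (simp add: mem_closure_OmegaH_iff sum_subtractf)
    then have "norm (\<Sum>k\<in>Hstar n. of_real (cstar n k) * phi k (t - gridpt n j)) \<le> kernel_majorant n (t - gridpt n j)"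
      by (rule norm_Hstar_kernel_sum_le[OF assms(1)])
    moreover have "norm (Phistar n s) = norm (\<Sum>k\<in>Hstar n. of_real (cstar n k) * phi k s) / (4 * real n ^ 3)"
      for s unfolding Phistar_def using assms(1) by (simp add: norm_mult norm_divide norm_power)
    ultimately have "norm (Phistar n (t - gridpt n j)) \<le> kernel_majorant n (t - gridpt n j) / (4 * real n ^ 3)"
      by (simp add: divide_right_mono)
    then show ?thesis
      unfolding norm_mult using assms(3)[OF grid] B by (intro mult_mono) auto
  qed
  then have "norm (Istar n f t) \<le> (\<Sum>j\<in>Hstar n. B * (kernel_majorant n (t - gridpt n j) / (4 * real n ^ 3)))"
    unfolding Istar_def by (intro order.trans[OF norm_sum] sum_mono)
  also have "\<dots> = B * (\<Sum>j\<in>Hstar n. kernel_majorant n (t - gridpt n j)) / (4 * real n ^ 3)"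
    by (simp add: sum_distrib_left sum_divide_distrib)
  also have "\<dots> \<le> B * (card {y :: 4 set \<times> 4 set. snd y \<noteq> {}} * line_bound n ^ 3) / (4 * real n ^ 3)"
    using sum_kernel_majorant_grid_le[OF assms(1,2)] B by (intro divide_right_mono mult_left_mono) auto
  finally show ?thesis by (simp add: mult_ac)
qed

theorem theorem3p19:
  shows "\<exists>c::real. \<forall>n::nat. n \<ge> 2 \<longrightarrow>
     (\<forall>f::real^4 \<Rightarrow> complex. continuous_on (closure OmegaH) f \<longrightarrow>
        (\<forall>t\<in>closure OmegaH.
           norm (Istar n f t) \<le> c * (ln (real n)) ^ 3 * (SUP x\<in>closure OmegaH. norm (f x))))"
proof (intro exI allI impI ballI)
  define K where "K = real (card {y :: 4 set \<times> 4 set. snd y \<noteq> {}})"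
  fix n :: nat and f :: "real^4 \<Rightarrow> complex" and t
  assume n: "n \<ge> 2" and f: "continuous_on (closure OmegaH) f" and t: "t \<in> closure OmegaH"
  define B where "B = (SUP x\<in>closure OmegaH. norm (f x))"
  have "bdd_above ((\<lambda>x. norm (f x)) ` closure OmegaH)"
    using compact_continuous_image[OF continuous_on_norm[OF f] compact_closure_OmegaH]
    by (intro bounded_imp_bdd_above compact_imp_bounded)
  then have f_le: "norm (f x) \<le> B" if "x \<in> closure OmegaH" for x
    unfolding B_def by (rule cSUP_upper[OF that])
  have "0 \<le> B" using f_le[OF t] by (meson norm_ge_zero order_trans)
  have "norm (Istar n f t) \<le> K * (line_bound n ^ 3 / (4 * real n ^ 3)) * B"
    using norm_Istar_le[of n t f B] n t f_le by (simp add: K_def)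
  also have "\<dots> \<le> K * (560 ^ 3 / 4 * ln (real n) ^ 3) * B"
    using line_bound_cube_le[OF n] \<open>0 \<le> B\<close> by (intro mult_right_mono mult_left_mono) (auto simp: K_def)
  finally show "norm (Istar n f t) \<le> K * 560 ^ 3 / 4 * ln (real n) ^ 3 * (SUP x\<in>closure OmegaH. norm (f x))"
    by (simp add: B_def mult_ac)
qed

end
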